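(* Let $q$ and $c$ be complex numbers with $|q|<1$ and $|cq|<1$. For each non-negative integer $m$ define \[ M_{m,c} = \sum_{n=1}^{\infty} n^m c^n q^n (q^{n+1};q)_\infty, \qquad K_{m+1,c} = \sum_{n=1}^{\infty} \sigma_{m,c}(n) q^n, \] where $\sigma_{m,c}(n) = \sum_{d\mid n} d^m c^d$. Then, as an identity of formal power series in $t$ (equivalently, for all complex $t$ in a neighbourhood of $0$), \[ \frac{(q;q)_\infty}{(cq;q)_\infty} \exp\Bigl(\sum_{m=1}^{\infty} K_{m,c} \frac{t^m}{m!}\Bigr) = \frac{(q;q)_\infty}{(cq;q)_\infty} + \sum_{m=1}^{\infty} M_{m,c} \frac{t^m}{m!}, \] and for every integer $m\ge 1$, \[ M_{m,c} = \frac{(q;q)_\infty}{(cq;q)_\infty}\, Y_m(K_{1,c}, K_{2,c}, \dots, K_{m,c}), \] where $Y_m$ is the Bell polynomial \[ Y_m(u_1,\dots,u_m) = \sum \frac{m!}{k_1!\cdots k_m!}\Bigl(\frac{u_1}{1!}\Bigr)^{k_1}\cdots \Bigl(\frac{u_m}{m!}\Bigr)^{k_m}, \] the sum being over all tuples $(k_1,\dots,k_m)$ of non-negative integers with $k_1 + 2k_2 + \cdots + m k_m = m$.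
   Context: For complex $a$ and $|q|<1$, $(a;q)_\infty = \prod_{j=0}^{\infty}(1-aq^j)$; thus $(q^{n+1};q)_\infty=\prod_{j\ge n+1}(1-q^j)$. The sum $\sum_{d\mid n}$ runs over positive divisors $d$ of $n$. *)

theory Defs
  imports "HOL-Analysis.Analysis" "HOL-Computational_Algebra.Formal_Power_Series"
begin

definition qpoch_inf :: "complex \<Rightarrow> complex \<Rightarrow> complex" where
  "qpoch_inf a q = (\<Prod>j. 1 - a * q ^ j)"

definition Mc :: "nat \<Rightarrow> complex \<Rightarrow> complex \<Rightarrow> complex" where
  "Mc m c q = (\<Sum>n. of_nat (Suc n) ^ m * c ^ Suc n * q ^ Suc n * qpoch_inf (q ^ (Suc n + 1)) q)"

definition sigma_c :: "nat \<Rightarrow> complex \<Rightarrow> nat \<Rightarrow> complex" where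
  "sigma_c m c n = (\<Sum>d\<in>{d. d dvd n}. of_nat d ^ m * c ^ d)"

text \<open>K_{m+1,c} = sum_{n>=1} sigma_{m,c}(n) q^n; so K_k c q uses sigma_{k-1,c}, for k >= 1.\<close>
definition Kc :: "nat \<Rightarrow> complex \<Rightarrow> complex \<Rightarrow> complex" where
  "Kc k c q = (\<Sum>n. sigma_c (k - 1) c (Suc n) * q ^ Suc n)"

definition bell_tuples :: "nat \<Rightarrow> (nat \<Rightarrow> nat) set" where
  "bell_tuples m = {k. (\<forall>i. i \<notin> {1..m} \<longrightarrow> k i = 0) \<and> (\<Sum>i=1..m. i * k i) = m}"

definition bellY :: "nat \<Rightarrow> (nat \<Rightarrow> complex) \<Rightarrow> complex" where
  "bellY m u = (\<Sum>k\<in>bell_tuples m.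
      fact m / (\<Prod>i=1..m. fact (k i)) * (\<Prod>i=1..m. (u i / fact i) ^ k i))"

end

(*
  Both sides are Taylor expansions at t = 0 of the same analytic function. By Euler's identity
  sum_n (q^(n+1);q)_inf x^n = (q;q)_inf / (x;q)_inf at x = c q e^t, the series
  sum_n (cq)^n (q^(n+1);q)_inf e^(nt), whose t^m coefficient is M_{m,c} / m! for m >= 1, equals
  (q;q)_inf / (cq e^t;q)_inf = (q;q)_inf / (cq;q)_inf * exp G(t), where
  G(t) = log (cq;q)_inf - log (cq e^t;q)_inf. Expanding each logarithm of a factor into a power
  series and collecting the terms (c q^(j+1))^(d+1) (d+1)^(m-1) according to n = (j+1)(d+1)
  shows that the t^m coefficient of G is K_{m,c} / m!. The Bell polynomial formula then reads off
  the t^m coefficient of exp G.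
*)
theory Submission
  imports Defs "HOL-Complex_Analysis.Complex_Analysis"
begin

section \<open>Exponential sums as power series\<close>

lemma power_div_fact_le_exp:
  fixes x :: real
  assumes "x \<ge> 0"
  shows "x ^ m / fact m \<le> exp x"
proof -
  have "(\<lambda>n. x ^ n / fact n) sums exp x"
    using exp_converges[of x] by (simp add: divide_inverse mult.commute)
  hence "(\<Sum>n\<in>{m}. x ^ n / fact n) \<le> exp x"
    using assms by (intro sum_le_suminf[of "\<lambda>n. x ^ n / fact n", THEN order.trans]) (auto simp: sums_iff)
  thus ?thesis by simp
qed

lemma has_sum_exp:
  fixes x :: "'a :: {real_normed_field, banach}"
  shows "((\<lambda>m. x ^ m / fact m) has_sum exp x) UNIV"
proof -
  have "((\<lambda>m. x ^ m /\<^sub>R fact m) has_sum exp x) UNIV"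
    by (intro norm_summable_imp_has_sum exp_converges summable_norm_exp)
  thus ?thesis by (simp add: scaleR_conv_of_real divide_inverse mult.commute)
qed

lemma summable_on_mult_power_if_exp_summable:
  fixes a w :: "'i \<Rightarrow> complex"
  assumes r: "r > 0" and S: "(\<lambda>i. norm (a i) * exp (norm (w i) * r)) summable_on I"
  shows "(\<lambda>i. a i * w i ^ m) summable_on I"
  unfolding summable_on_iff_abs_summable_on_complex
proof (rule Infinite_Sum.abs_summable_on_comparison_test)
  show "(\<lambda>i. norm (fact m / r ^ m * (norm (a i) * exp (norm (w i) * r)))) summable_on I"
    using summable_on_cmult_right[OF S, of "fact m / r ^ m"] r by (simp add: abs_mult)
  fix i
  have "(norm (w i) * r) ^ m / fact m \<le> exp (norm (w i) * r)"
    using r by (intro power_div_fact_le_exp) auto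
  hence "norm (w i) ^ m \<le> fact m / r ^ m * exp (norm (w i) * r)"
    using r by (simp add: field_simps power_mult_distrib)
  hence "norm (a i) * norm (w i) ^ m \<le> norm (a i) * (fact m / r ^ m * exp (norm (w i) * r))"
    by (rule mult_left_mono) auto
  thus "norm (a i * w i ^ m) \<le> norm (fact m / r ^ m * (norm (a i) * exp (norm (w i) * r)))"
    using r by (simp add: norm_mult norm_power abs_mult mult_ac)
qed

lemma summable_on_mult_exp_if_exp_summable:
  fixes a w :: "'i \<Rightarrow> complex"
  assumes S: "(\<lambda>i. norm (a i) * exp (norm (w i) * r)) summable_on I" and t: "norm t \<le> r"
  shows "(\<lambda>i. a i * exp (w i * t)) summable_on I"
  unfolding summable_on_iff_abs_summable_on_complex
proof (rule Infinite_Sum.abs_summable_on_comparison_test)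
  show "(\<lambda>i. norm (norm (a i) * exp (norm (w i) * r))) summable_on I"
    using S by (simp add: abs_mult)
  fix i
  have "norm (exp (w i * t)) \<le> exp (norm (w i * t))"
    by (rule norm_exp)
  also have "\<dots> \<le> exp (norm (w i) * r)"
    using t by (auto simp: norm_mult intro: mult_left_mono)
  finally have "norm (exp (w i * t)) \<le> exp (norm (w i) * r)" .
  thus "norm (a i * exp (w i * t)) \<le> norm (norm (a i) * exp (norm (w i) * r))"
    by (simp add: norm_mult mult_left_mono)
qed

lemma abs_summable_on_exp_double_series:
  fixes a w :: "'i \<Rightarrow> complex"
  assumes S: "(\<lambda>i. norm (a i) * exp (norm (w i) * r)) summable_on I" and t: "norm t \<le> r"
  shows "(\<lambda>(i, m). norm (a i * ((w i * t) ^ m / fact m))) summable_on I \<times> UNIV"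
proof -
  have inner: "((\<lambda>m. norm (a i * ((w i * t) ^ m / fact m)))
                has_sum norm (a i) * exp (norm (w i) * norm t)) UNIV" for i
    using has_sum_cmult_right[OF has_sum_exp[of "norm (w i) * norm t"], of "norm (a i)"]
    by (simp add: norm_mult norm_divide norm_power power_mult_distrib)
  have "(\<lambda>i. norm (norm (a i) * exp (norm (w i) * norm t))) summable_on I"
  proof (rule Infinite_Sum.abs_summable_on_comparison_test)
    show "(\<lambda>i. norm (norm (a i) * exp (norm (w i) * r))) summable_on I"
      using S by (simp add: abs_mult)
    show "norm (norm (a i) * exp (norm (w i) * norm t)) \<le> norm (norm (a i) * exp (norm (w i) * r))" for i
      using t by (auto intro!: mult_left_mono)
  qed
  moreover have "(\<Sum>\<^sub>\<infinity>m. norm (a i * ((w i * t) ^ m / fact m))) = norm (a i) * exp (norm (w i) * norm t)" for i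
    using inner by (rule infsumI)
  ultimately have "(\<lambda>x. norm ((\<lambda>(i, m). a i * ((w i * t) ^ m / fact m)) x)) summable_on I \<times> UNIV"
    using inner by (subst Infinite_Sum.abs_summable_on_Sigma_iff) (auto simp: summable_on_def)
  thus ?thesis
    by (simp add: case_prod_unfold)
qed

text \<open>Expand every exponential into its power series and interchange the two summations, which is
  justified by the absolute convergence of the double series for \<open>norm t \<le> r\<close>.\<close>
lemma has_fps_expansion_infsum_exp:
  fixes a w :: "'i \<Rightarrow> complex"
  assumes r: "r > 0" and S: "(\<lambda>i. norm (a i) * exp (norm (w i) * r)) summable_on I"
  shows "(\<lambda>t. \<Sum>\<^sub>\<infinity>i\<in>I. a i * exp (w i * t)) has_fps_expansion
           Abs_fps (\<lambda>m. (\<Sum>\<^sub>\<infinity>i\<in>I. a i * w i ^ m) / fact m)"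
proof (rule has_fps_expansionI)
  have "eventually (\<lambda>t. t \<in> ball 0 r) (nhds (0::complex))"
    using r by (intro eventually_nhds_in_open) auto
  then show "eventually (\<lambda>t. (\<lambda>m. Abs_fps (\<lambda>m. (\<Sum>\<^sub>\<infinity>i\<in>I. a i * w i ^ m) / fact m) $ m * t ^ m)
      sums (\<Sum>\<^sub>\<infinity>i\<in>I. a i * exp (w i * t))) (nhds 0)"
  proof eventually_elim
    case (elim t)
    define h where "h = (\<lambda>(i, m). a i * ((w i * t) ^ m / fact m))"
    have "norm t \<le> r"
      using elim by simp
    hence "(\<lambda>(i, m). norm (a i * ((w i * t) ^ m / fact m))) summable_on I \<times> UNIV"
      by (rule abs_summable_on_exp_double_series[OF S])
    also have "(\<lambda>(i, m). norm (a i * ((w i * t) ^ m / fact m))) = (\<lambda>x. norm (h x))"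
      by (simp add: h_def case_prod_unfold)
    finally have "h summable_on I \<times> UNIV"
      by (rule abs_summable_summable)
    then obtain H where H: "(h has_sum H) (I \<times> UNIV)"
      by (auto simp: summable_on_def)
    have columns: "((\<lambda>m. h (i, m)) has_sum a i * exp (w i * t)) UNIV" for i
      unfolding h_def using has_sum_cmult_right[OF has_sum_exp[of "w i * t"], of "a i"] by simp
    have "((\<lambda>i. a i * exp (w i * t)) has_sum H) I"
      by (rule has_sum_Sigma'[OF H columns])
    hence H_eq: "H = (\<Sum>\<^sub>\<infinity>i\<in>I. a i * exp (w i * t))"
      by (simp add: infsumI)
    have swapped: "((\<lambda>(m, i). h (i, m)) has_sum H) (UNIV \<times> I)"
      using H by (subst (asm) has_sum_swap)
    have rows: "((\<lambda>i. h (i, m)) has_sum (\<Sum>\<^sub>\<infinity>i\<in>I. a i * w i ^ m) * (t ^ m / fact m)) I" for m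
    proof -
      have "((\<lambda>i. a i * w i ^ m) has_sum (\<Sum>\<^sub>\<infinity>i\<in>I. a i * w i ^ m)) I"
        using summable_on_mult_power_if_exp_summable[OF r S] by (rule has_sum_infsum)
      hence "((\<lambda>i. a i * w i ^ m * (t ^ m / fact m)) has_sum
               (\<Sum>\<^sub>\<infinity>i\<in>I. a i * w i ^ m) * (t ^ m / fact m)) I"
        by (rule has_sum_cmult_left)
      moreover have "h (i, m) = a i * w i ^ m * (t ^ m / fact m)" for i
        by (simp add: h_def power_mult_distrib)
      ultimately show ?thesis by simp
    qed
    have "((\<lambda>m. (\<Sum>\<^sub>\<infinity>i\<in>I. a i * w i ^ m) * (t ^ m / fact m)) has_sum H) UNIV"
      by (rule has_sum_Sigma'[OF swapped]) (use rows in simp)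
    thus ?case
      unfolding H_eq by (intro has_sum_imp_sums) simp
  qed
qed

section \<open>The infinite q-Pochhammer symbol and Euler's identity\<close>

lemma norm_mult_power_less_one:
  fixes x q :: "'a :: real_normed_div_algebra"
  assumes "norm q \<le> 1" and "norm x < 1"
  shows "norm (x * q ^ n) < 1"
proof -
  have "norm (x * q ^ n) \<le> norm x"
    using assms by (simp add: norm_mult norm_power mult_left_le power_le_one)
  thus ?thesis
    using assms(2) by linarith
qed

lemma convergent_prod_qpoch:
  fixes a q :: complex
  assumes "norm q < 1"
  shows "convergent_prod (\<lambda>j. 1 - a * q ^ j)"
proof (rule abs_convergent_prod_imp_convergent_prod, rule summable_imp_abs_convergent_prod)
  have "summable (\<lambda>j. norm a * norm q ^ j)"
    using assms by (intro summable_mult summable_geometric) auto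
  thus "summable (\<lambda>j. norm (1 - a * q ^ j - 1))"
    by (simp add: norm_mult norm_power)
qed

lemma qpoch_inf_LIMSEQ:
  fixes a q :: complex
  assumes "norm q < 1"
  shows "(\<lambda>n. \<Prod>j<n. 1 - a * q ^ j) \<longlonglongrightarrow> qpoch_inf a q"
proof -
  have "(\<lambda>n. \<Prod>j\<le>n. 1 - a * q ^ j) \<longlonglongrightarrow> qpoch_inf a q"
    unfolding qpoch_inf_def by (rule convergent_prod_LIMSEQ[OF convergent_prod_qpoch[OF assms]])
  hence "(\<lambda>n. \<Prod>j<Suc n. 1 - a * q ^ j) \<longlonglongrightarrow> qpoch_inf a q"
    by (simp add: lessThan_Suc_atMost)
  thus ?thesis
    by (rule LIMSEQ_imp_Suc)
qed

lemma qpoch_inf_unfold: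
  fixes a q :: complex
  assumes "norm q < 1"
  shows "qpoch_inf a q = (1 - a) * qpoch_inf (a * q) q"
proof -
  have "(\<lambda>n. \<Prod>j<Suc n. 1 - a * q ^ j) \<longlonglongrightarrow> qpoch_inf a q"
    using qpoch_inf_LIMSEQ[OF assms] by (rule LIMSEQ_Suc)
  moreover have "(\<lambda>n. \<Prod>j<Suc n. 1 - a * q ^ j) = (\<lambda>n. (1 - a) * (\<Prod>j<n. 1 - (a * q) * q ^ j))"
    unfolding prod.lessThan_Suc_shift by (simp add: mult_ac)
  moreover have "(\<lambda>n. (1 - a) * (\<Prod>j<n. 1 - (a * q) * q ^ j)) \<longlonglongrightarrow> (1 - a) * qpoch_inf (a * q) q"
    by (intro tendsto_mult tendsto_const qpoch_inf_LIMSEQ assms)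
  ultimately show ?thesis
    using LIMSEQ_unique by metis
qed

lemma qpoch_inf_nonzero:
  fixes a q :: complex
  assumes "norm q < 1" and "norm a < 1"
  shows "qpoch_inf a q \<noteq> 0"
  unfolding qpoch_inf_def
proof (intro prodinf_nonzero convergent_prod_qpoch assms(1))
  show "1 - a * q ^ j \<noteq> 0" for j
    using norm_mult_power_less_one[of q a j] assms by auto
qed

lemma norm_qpoch_inf_le:
  fixes a q :: complex
  assumes "norm q < 1" and "norm a \<le> 1"
  shows "norm (qpoch_inf a q) \<le> exp (1 / (1 - norm q))"
proof (rule Lim_norm_ubound[OF _ qpoch_inf_LIMSEQ[OF assms(1)]])
  show "\<forall>\<^sub>F n in sequentially. norm (\<Prod>j<n. 1 - a * q ^ j) \<le> exp (1 / (1 - norm q))"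
  proof (intro always_eventually allI)
    fix n
    have "norm (\<Prod>j<n. 1 - a * q ^ j) \<le> (\<Prod>j<n. norm (1 - a * q ^ j))"
      by (simp add: prod_norm)
    also have "\<dots> \<le> (\<Prod>j<n. exp (norm q ^ j))"
    proof (rule prod_mono, safe)
      fix j
      have "norm (1 - a * q ^ j) \<le> 1 + norm a * norm q ^ j"
        by (metis norm_triangle_ineq4 norm_one norm_mult norm_power)
      also have "\<dots> \<le> 1 + norm q ^ j"
        using assms by (auto intro: mult_left_le_one_le)
      also have "\<dots> \<le> exp (norm q ^ j)"
        by (rule exp_ge_add_one_self)
      finally show "norm (1 - a * q ^ j) \<le> exp (norm q ^ j)" .
    qed simp
    also have "\<dots> = exp (\<Sum>j<n. norm q ^ j)"
      by (simp add: exp_sum)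
    also have "(\<Sum>j<n. norm q ^ j) \<le> (\<Sum>j. norm q ^ j)"
      using assms by (intro sum_le_suminf summable_geometric) auto
    also have "(\<Sum>j. norm q ^ j) = 1 / (1 - norm q)"
      using assms by (simp add: suminf_geometric)
    finally show "norm (\<Prod>j<n. 1 - a * q ^ j) \<le> exp (1 / (1 - norm q))"
      by simp
  qed
qed simp

definition qpoch_tail_fps :: "complex \<Rightarrow> complex fps" where
  "qpoch_tail_fps q = Abs_fps (\<lambda>n. qpoch_inf (q ^ Suc n) q)"

lemma norm_qpoch_tail_le:
  fixes q :: complex
  assumes "norm q < 1"
  shows "norm (qpoch_inf (q ^ Suc n) q) \<le> exp (1 / (1 - norm q))"
  using assms by (intro norm_qpoch_inf_le) (simp_all add: norm_power power_le_one del: power_Suc)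

lemma summable_qpoch_tail_fps:
  fixes q z :: complex
  assumes q: "norm q < 1" and z: "norm z < 1"
  shows "summable (\<lambda>n. qpoch_tail_fps q $ n * z ^ n)"
proof (rule summable_comparison_test')
  show "summable (\<lambda>n. exp (1 / (1 - norm q)) * norm z ^ n)"
    using z by (intro summable_mult summable_geometric) auto
  show "norm (qpoch_tail_fps q $ n * z ^ n) \<le> exp (1 / (1 - norm q)) * norm z ^ n" for n
    using norm_qpoch_tail_le[OF q, of n]
    by (simp add: qpoch_tail_fps_def norm_mult norm_power mult_right_mono)
qed

lemma fps_conv_radius_qpoch_tail_fps:
  fixes q :: complex
  assumes "norm q < 1"
  shows "fps_conv_radius (qpoch_tail_fps q) > 0"
proof -
  have "fps_conv_radius (qpoch_tail_fps q) \<ge> norm (1/2 :: complex)"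
    unfolding fps_conv_radius_def
    by (rule conv_radius_geI) (use summable_qpoch_tail_fps[OF assms, of "1/2"] in simp)
  thus ?thesis
    by (rule less_le_trans[rotated]) (simp add: zero_ereal_def)
qed

lemma eval_qpoch_tail_fps_mult_q:
  fixes q z :: complex
  assumes q: "norm q < 1" and z: "norm z < 1"
  shows "eval_fps (qpoch_tail_fps q) (z * q) = (1 - z) * eval_fps (qpoch_tail_fps q) z"
proof -
  let ?P = "\<lambda>n. qpoch_inf (q ^ n) q" and ?F = "eval_fps (qpoch_tail_fps q)"
  have "norm (z * q) < 1"
    using norm_mult_power_less_one[of q z 1] q z by simp
  have "?F z - ?F (z * q) = (\<Sum>n. ?P (Suc n) * z ^ n - ?P (Suc n) * (z * q) ^ n)"
    unfolding eval_fps_def using summable_qpoch_tail_fps[OF q z] summable_qpoch_tail_fps[OF q \<open>norm (z * q) < 1\<close>]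
    by (simp add: suminf_diff qpoch_tail_fps_def)
  also have "\<dots> = (\<Sum>n. ?P n * z ^ n)"
  proof (rule suminf_cong)
    fix n
    have unfold: "?P n = (1 - q ^ n) * ?P (Suc n)"
      using qpoch_inf_unfold[OF q, of "q ^ n"] by (simp add: mult.commute)
    show "?P (Suc n) * z ^ n - ?P (Suc n) * (z * q) ^ n = ?P n * z ^ n"
      by (simp only: unfold) (simp add: power_mult_distrib algebra_simps)
  qed
  also have "\<dots> = z * ?F z"
  proof -
    have "(\<lambda>n. ?P (Suc n) * z ^ Suc n) sums (z * ?F z)"
      using sums_mult[OF summable_sums[OF summable_qpoch_tail_fps[OF q z]], of z]
      by (simp add: eval_fps_def qpoch_tail_fps_def mult_ac)
    moreover have "?P 0 = 0"
      using qpoch_inf_unfold[OF q, of 1] by simp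
    ultimately have "(\<lambda>n. ?P n * z ^ n) sums (z * ?F z)"
      using sums_Suc_iff[of "\<lambda>n. ?P n * z ^ n"] by simp
    thus ?thesis
      by (rule sums_unique[symmetric])
  qed
  finally show ?thesis
    by (simp add: algebra_simps)
qed

text \<open>Iterating \<open>F (x q) = (1 - x) F x\<close> gives \<open>F (x q ^ N) = (x;q)\<^sub>N F x\<close>;
  let \<open>N \<rightarrow> \<infinity>\<close> and use continuity of \<open>F\<close> at \<open>0\<close>, where \<open>F 0 = (q;q)\<^sub>\<infinity>\<close>.\<close>
lemma qpoch_inf_mult_eval_qpoch_tail_fps:
  fixes q x :: complex
  assumes q: "norm q < 1" and x: "norm x < 1"
  shows "qpoch_inf x q * eval_fps (qpoch_tail_fps q) x = qpoch_inf q q"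
proof -
  let ?F = "eval_fps (qpoch_tail_fps q)"
  have iterate: "?F (x * q ^ N) = (\<Prod>j<N. 1 - x * q ^ j) * ?F x" for N
  proof (induction N)
    case (Suc N)
    have "norm (x * q ^ N) < 1"
      using norm_mult_power_less_one[of q x N] q x by simp
    hence "?F (x * q ^ N * q) = (1 - x * q ^ N) * ?F (x * q ^ N)"
      by (rule eval_qpoch_tail_fps_mult_q[OF q])
    thus ?case
      using Suc by (simp add: mult_ac)
  qed simp
  have "(\<lambda>N. x * q ^ N) \<longlonglongrightarrow> 0"
    using tendsto_mult[OF tendsto_const LIMSEQ_power_zero[of q], of x] q by simp
  moreover have "isCont ?F 0"
    using fps_conv_radius_qpoch_tail_fps[OF q] by (intro continuous_eval_fps) (simp add: zero_ereal_def)
  ultimately have "(\<lambda>N. ?F (x * q ^ N)) \<longlonglongrightarrow> ?F 0"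
    by (rule isCont_tendsto_compose[rotated])
  moreover have "(\<lambda>N. ?F (x * q ^ N)) \<longlonglongrightarrow> qpoch_inf x q * ?F x"
    unfolding iterate by (intro tendsto_mult tendsto_const qpoch_inf_LIMSEQ q)
  ultimately have "qpoch_inf x q * ?F x = ?F 0"
    using LIMSEQ_unique by metis
  thus ?thesis
    by (simp add: eval_fps_at_0 qpoch_tail_fps_def)
qed

section \<open>The logarithm of the ratio of q-Pochhammer symbols\<close>

lemma norm_power_Suc_div_le:
  fixes v :: complex
  shows "norm (v ^ Suc d / of_nat (Suc d)) \<le> norm v ^ Suc d"
proof -
  have "norm v ^ Suc d * 1 \<le> norm v ^ Suc d * real (Suc d)"
    by (intro mult_left_mono) auto
  thus ?thesis
    by (simp add: norm_divide norm_power divide_le_eq del: of_nat_Suc power_Suc)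
qed

lemma has_sum_neg_ln_one_minus:
  fixes v :: complex
  assumes "norm v < 1"
  shows "((\<lambda>d. v ^ Suc d / of_nat (Suc d)) has_sum - ln (1 - v)) UNIV"
proof (rule norm_summable_imp_has_sum)
  have "(\<lambda>n. - ((- (- v)) ^ n) / of_nat n) sums ln (1 + (- v))"
    using assms by (intro Ln_series') auto
  hence "(\<lambda>n. v ^ n / of_nat n) sums - ln (1 - v)"
    using sums_minus by fastforce
  thus "(\<lambda>d. v ^ Suc d / of_nat (Suc d)) sums - ln (1 - v)"
    using sums_Suc_iff[of "\<lambda>n. v ^ n / of_nat n"] by simp
  show "summable (\<lambda>d. norm (v ^ Suc d / of_nat (Suc d)))"
  proof (rule summable_comparison_test')
    show "summable (\<lambda>d. norm v ^ Suc d)"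
      using assms by (intro summable_geometric summable_Suc_iff[THEN iffD2]) auto
    show "norm (norm (v ^ Suc d / of_nat (Suc d))) \<le> norm v ^ Suc d" for d
      using norm_power_Suc_div_le[of v d] by simp
  qed
qed

lemma summable_on_geometric_times_geometric:
  fixes x y :: real
  assumes "0 \<le> x" "x < 1" "0 \<le> y" "y < 1"
  shows "(\<lambda>(j, d). x ^ j * y ^ d) summable_on UNIV \<times> UNIV"
proof (rule summable_on_SigmaI[where g = "\<lambda>j. x ^ j * (1 / (1 - y))"])
  have "((\<lambda>d. y ^ d) has_sum (1 / (1 - y))) UNIV"
    using assms by (intro norm_summable_imp_has_sum geometric_sums) (auto intro: summable_geometric)
  thus "((\<lambda>d. (\<lambda>(j, d). x ^ j * y ^ d) (j, d)) has_sum x ^ j * (1 / (1 - y))) UNIV" for j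
    using has_sum_cmult_right by fastforce
  have "(\<lambda>j. x ^ j) summable_on UNIV"
    using assms by (intro norm_summable_imp_summable_on summable_geometric) auto
  thus "(\<lambda>j. x ^ j * (1 / (1 - y))) summable_on UNIV"
    by (rule summable_on_cmult_left)
qed (use assms in auto)

text \<open>Expanding \<open>- ln (1 - x q ^ j)\<close> as a logarithmic series gives
  \<open>- ln (x;q)\<^sub>\<infinity> = (\<Sum>(j, d). (x q ^ j) ^ (d + 1) / (d + 1))\<close>; for \<open>x = c q e ^ t\<close> the term \<open>(j, d)\<close>
  is \<open>log_coeff c q (j, d) * e ^ ((d + 1) t)\<close>.\<close>
definition log_coeff :: "complex \<Rightarrow> complex \<Rightarrow> nat \<times> nat \<Rightarrow> complex" where
  "log_coeff c q = (\<lambda>(j, d). (c * q * q ^ j) ^ Suc d / of_nat (Suc d))"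

definition log_qpoch_ratio :: "complex \<Rightarrow> complex \<Rightarrow> complex \<Rightarrow> complex" where
  "log_qpoch_ratio c q t =
     (\<Sum>\<^sub>\<infinity>i. log_coeff c q i * exp (of_nat (Suc (snd i)) * t)) - (\<Sum>\<^sub>\<infinity>i. log_coeff c q i)"

lemma summable_on_log_coeff_exp:
  fixes c q :: complex and r :: real
  assumes q: "norm q < 1" and s: "norm (c * q) * exp r < 1"
  shows "(\<lambda>i. norm (log_coeff c q i) * exp (norm (of_nat (Suc (snd i)) :: complex) * r)) summable_on UNIV"
proof -
  define \<rho> where "\<rho> = norm (c * q) * exp r"
  have \<rho>: "0 \<le> \<rho>" "\<rho> < 1"
    using s by (auto simp: \<rho>_def)
  have "(\<lambda>(j, d). norm q ^ j * \<rho> ^ d) summable_on UNIV \<times> UNIV"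
    using q \<rho> by (intro summable_on_geometric_times_geometric) auto
  hence "(\<lambda>i. \<rho> * (\<lambda>(j, d). norm q ^ j * \<rho> ^ d) i) summable_on UNIV"
    by (simp add: summable_on_cmult_right)
  thus ?thesis
  proof (rule summable_on_comparison_test)
    fix i :: "nat \<times> nat"
    obtain j d where i: "i = (j, d)"
      by (cases i)
    have qj: "norm q ^ j \<le> 1"
      using q by (intro power_le_one) auto
    have "norm (log_coeff c q i) \<le> (norm (c * q) * norm q ^ j) ^ Suc d"
      using norm_power_Suc_div_le[of "c * q * q ^ j" d]
      by (simp add: i log_coeff_def norm_mult norm_power del: of_nat_Suc power_Suc)
    hence "norm (log_coeff c q i) * exp (norm (of_nat (Suc (snd i)) :: complex) * r)
             \<le> (norm (c * q) * norm q ^ j) ^ Suc d * exp (real (Suc d) * r)"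
      by (simp add: i mult_right_mono del: of_nat_Suc)
    also have "\<dots> = \<rho> ^ Suc d * (norm q ^ j) ^ Suc d"
      using exp_of_nat_mult[of "Suc d" r] by (simp only: \<rho>_def power_mult_distrib mult_ac)
    also have "\<dots> \<le> \<rho> ^ Suc d * norm q ^ j"
      using \<rho> qj by (intro mult_left_mono) (auto simp: power_le_one mult_left_le)
    finally show "norm (log_coeff c q i) * exp (norm (of_nat (Suc (snd i)) :: complex) * r)
                    \<le> \<rho> * (\<lambda>(j, d). norm q ^ j * \<rho> ^ d) i"
      by (simp add: i mult_ac)
  qed auto
qed

lemma norm_mult_exp_less_one:
  fixes x t :: complex and r :: real
  assumes s: "norm x * exp r < 1" and t: "norm t \<le> r"
  shows "norm x < 1" and "norm (x * exp t) < 1"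
proof -
  have "norm x * norm (exp t) \<le> norm x * exp r"
    using norm_exp[of t] t by (intro mult_left_mono) (auto intro: order.trans)
  thus "norm (x * exp t) < 1"
    using s by (simp add: norm_mult)
  have "0 \<le> r"
    using t norm_ge_zero[of t] by linarith
  hence "norm x * 1 \<le> norm x * exp r"
    by (intro mult_left_mono) auto
  thus "norm x < 1"
    using s by simp
qed

lemma log_qpoch_ratio_sums:
  fixes c q t :: complex and r :: real
  assumes q: "norm q < 1" and s: "norm (c * q) * exp r < 1" and t: "norm t \<le> r"
  shows "(\<lambda>j. ln (1 - c * q * q ^ j) - ln (1 - c * q * exp t * q ^ j)) sums log_qpoch_ratio c q t"
proof -
  note S = summable_on_log_coeff_exp[OF q s]
  have "r \<ge> 0"
    using t norm_ge_zero[of t] by linarith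
  have logs: "norm (c * q * exp t * q ^ j) < 1" "norm (c * q * q ^ j) < 1" for j
    using norm_mult_exp_less_one[OF s t] q by (auto intro: norm_mult_power_less_one)
  have total: "((\<lambda>i. log_coeff c q i * exp (of_nat (Suc (snd i)) * t) + - log_coeff c q i)
           has_sum log_qpoch_ratio c q t) (UNIV \<times> UNIV)"
    unfolding log_qpoch_ratio_def
    using has_sum_add[OF has_sum_infsum[OF summable_on_mult_exp_if_exp_summable[OF S t]]
                         has_sum_uminusI[OF has_sum_infsum[OF summable_on_mult_exp_if_exp_summable[OF S, of 0]]]]
          \<open>r \<ge> 0\<close>
    by simp
  have rows: "((\<lambda>d. log_coeff c q (j, d) * exp (of_nat (Suc d) * t) + - log_coeff c q (j, d))
                   has_sum - ln (1 - c * q * exp t * q ^ j) + - (- ln (1 - c * q * q ^ j))) UNIV" for j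
  proof -
    have coeff: "log_coeff c q (j, d) = (c * q * q ^ j) ^ Suc d / of_nat (Suc d)" for d
      by (simp add: log_coeff_def)
    have coeff_exp: "(c * q * q ^ j) ^ Suc d / of_nat (Suc d) * exp (of_nat (Suc d) * t)
                     = (c * q * exp t * q ^ j) ^ Suc d / of_nat (Suc d)" for d
      by (simp only: exp_of_nat_mult power_mult_distrib) (simp add: mult_ac)
    show ?thesis
      unfolding coeff coeff_exp
      by (intro has_sum_add has_sum_uminusI has_sum_neg_ln_one_minus logs)
  qed
  have "((\<lambda>j. - ln (1 - c * q * exp t * q ^ j) + - (- ln (1 - c * q * q ^ j)))
          has_sum log_qpoch_ratio c q t) UNIV"
    by (rule has_sum_Sigma'[OF total]) (use rows in simp)
  hence "((\<lambda>j. ln (1 - c * q * q ^ j) - ln (1 - c * q * exp t * q ^ j)) has_sum log_qpoch_ratio c q t) UNIV"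
    by simp
  thus ?thesis
    by (rule has_sum_imp_sums)
qed

lemma qpoch_inf_mult_exp_log_qpoch_ratio:
  fixes c q t :: complex and r :: real
  assumes q: "norm q < 1" and s: "norm (c * q) * exp r < 1" and t: "norm t \<le> r"
  shows "qpoch_inf (c * q * exp t) q * exp (log_qpoch_ratio c q t) = qpoch_inf (c * q) q"
proof -
  define u where "u j = 1 - c * q * q ^ j" for j
  define v where "v j = 1 - c * q * exp t * q ^ j" for j
  have partial: "(\<Prod>j<n. v j) * exp (\<Sum>j<n. ln (u j) - ln (v j)) = (\<Prod>j<n. u j)" for n
  proof -
    have "norm (c * q * q ^ j) < 1" "norm (c * q * exp t * q ^ j) < 1" for j
      using norm_mult_exp_less_one[OF s t] q by (auto intro: norm_mult_power_less_one)
    hence "u j \<noteq> 0" "v j \<noteq> 0" for j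
      unfolding u_def v_def by (metis norm_one less_irrefl right_minus_eq)+
    hence "v j * exp (ln (u j) - ln (v j)) = u j" for j
      by (simp add: exp_diff)
    thus ?thesis
      by (simp add: exp_sum prod.distrib[symmetric])
  qed
  have "(\<lambda>n. (\<Prod>j<n. v j) * exp (\<Sum>j<n. ln (u j) - ln (v j)))
          \<longlonglongrightarrow> qpoch_inf (c * q * exp t) q * exp (log_qpoch_ratio c q t)"
    using log_qpoch_ratio_sums[OF q s t] unfolding u_def v_def sums_def
    by (intro tendsto_mult tendsto_exp qpoch_inf_LIMSEQ q)
  moreover have "(\<lambda>n. \<Prod>j<n. u j) \<longlonglongrightarrow> qpoch_inf (c * q) q"
    unfolding u_def by (rule qpoch_inf_LIMSEQ[OF q])
  ultimately show ?thesis
    unfolding partial by (rule LIMSEQ_unique)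
qed

lemma has_sum_divisor_pairs_iff:
  fixes f :: "nat \<Rightarrow> nat \<Rightarrow> 'a :: {comm_monoid_add, topological_space}"
  shows "((\<lambda>(j, d). f (Suc j * Suc d) (Suc d)) has_sum S) UNIV \<longleftrightarrow>
         ((\<lambda>(n, e). f (Suc n) e) has_sum S) (SIGMA n:UNIV. {e. e dvd Suc n})"
proof (rule has_sum_reindex_bij_witness[where j = "\<lambda>(j, d). (Suc j * Suc d - 1, Suc d)"
                                            and i = "\<lambda>(n, e). (Suc n div e - 1, e - 1)"])
  fix x :: "nat \<times> nat"
  obtain j d where x: "x = (j, d)"
    by (cases x)
  have pos: "Suc (Suc j * Suc d - 1) = Suc j * Suc d"
    by simp
  show "(\<lambda>(n, e). (Suc n div e - 1, e - 1)) ((\<lambda>(j, d). (Suc j * Suc d - 1, Suc d)) x) = x"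
    unfolding x using pos by (simp del: mult_Suc mult_Suc_right)
  show "(\<lambda>(j, d). (Suc j * Suc d - 1, Suc d)) x \<in> (SIGMA n:UNIV. {e. e dvd Suc n})"
    unfolding x using pos by (simp del: mult_Suc mult_Suc_right)
  show "(\<lambda>(n, e). f (Suc n) e) ((\<lambda>(j, d). (Suc j * Suc d - 1, Suc d)) x) =
          (\<lambda>(j, d). f (Suc j * Suc d) (Suc d)) x"
    unfolding x using pos by (simp del: mult_Suc mult_Suc_right)
next
  fix y assume "y \<in> (SIGMA n:UNIV. {e. e dvd Suc n})"
  then obtain n e where y: "y = (n, e)" and "e dvd Suc n"
    by auto
  then obtain l where l: "Suc n = e * l"
    by (auto elim: dvdE)
  hence "e \<ge> 1" "l \<ge> 1"
    by (cases e; cases l; simp)+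
  thus "(\<lambda>(j, d). (Suc j * Suc d - 1, Suc d)) ((\<lambda>(n, e). (Suc n div e - 1, e - 1)) y) = y"
    unfolding y using l by (simp add: mult.commute del: mult_Suc mult_Suc_right)
qed auto

lemma infsum_log_coeff_eq_Kc:
  fixes c q :: complex and r :: real
  assumes q: "norm q < 1" and s: "norm (c * q) * exp r < 1" and r: "r > 0" and m: "m \<ge> 1"
  shows "(\<Sum>\<^sub>\<infinity>i. log_coeff c q i * of_nat (Suc (snd i)) ^ m) = Kc m c q"
proof -
  define f where "f n e = of_nat e ^ (m - 1) * c ^ e * q ^ n" for n e :: nat
  have coeff_power: "log_coeff c q (j, d) * of_nat (Suc d) ^ m = f (Suc j * Suc d) (Suc d)" for j d
  proof -
    obtain k where k: "m = Suc k"
      using m by (cases m) auto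
    have "(c * q * q ^ j) ^ Suc d = c ^ Suc d * q ^ (Suc j * Suc d)"
      by (simp only: mult.assoc power_Suc[symmetric] power_mult_distrib power_mult)
    hence coeff: "log_coeff c q (j, d) = c ^ Suc d * q ^ (Suc j * Suc d) / of_nat (Suc d)"
      by (simp only: log_coeff_def case_prod_conv)
    have "(of_nat (Suc d) :: complex) \<noteq> 0"
      by (simp only: of_nat_eq_0_iff)
    thus ?thesis
      unfolding coeff f_def k diff_Suc_1 power_Suc[of "of_nat (Suc d) :: complex"]
      by (simp add: field_simps)
  qed
  have eq: "(\<lambda>i. log_coeff c q i * of_nat (Suc (snd i)) ^ m) = (\<lambda>(j, d). f (Suc j * Suc d) (Suc d))"
    using coeff_power by (simp add: fun_eq_iff)
  define V where "V = (\<Sum>\<^sub>\<infinity>i. log_coeff c q i * of_nat (Suc (snd i)) ^ m)"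
  have "((\<lambda>i. log_coeff c q i * of_nat (Suc (snd i)) ^ m) has_sum V) UNIV"
    unfolding V_def
    by (rule has_sum_infsum, rule summable_on_mult_power_if_exp_summable[OF r summable_on_log_coeff_exp[OF q s]])
  hence "((\<lambda>(j, d). f (Suc j * Suc d) (Suc d)) has_sum V) UNIV"
    by (simp only: eq)
  hence total: "((\<lambda>(n, e). f (Suc n) e) has_sum V) (SIGMA n:UNIV. {e. e dvd Suc n})"
    by (simp only: has_sum_divisor_pairs_iff)
  have fibres: "((\<lambda>e. f (Suc n) e) has_sum sigma_c (m - 1) c (Suc n) * q ^ Suc n) {e. e dvd Suc n}" for n
    by (rule has_sum_finiteI) (simp_all add: sigma_c_def f_def sum_distrib_right)
  have "((\<lambda>n. sigma_c (m - 1) c (Suc n) * q ^ Suc n) has_sum V) UNIV"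
    by (rule has_sum_Sigma'[OF total]) (use fibres in simp)
  hence "(\<lambda>n. sigma_c (m - 1) c (Suc n) * q ^ Suc n) sums V"
    by (rule has_sum_imp_sums)
  thus ?thesis
    unfolding Kc_def V_def by (simp add: sums_iff)
qed

section \<open>The series of the M coefficients\<close>

text \<open>\<open>Mc m c q = (\<Sum>n. tail_coeff c q n * n ^ m)\<close> for \<open>m \<ge> 1\<close>, and
  \<open>\<Sum>\<^sub>n tail_coeff c q n * x ^ n\<close> is the series of Euler's identity at \<open>c q x\<close>.\<close>
definition tail_coeff :: "complex \<Rightarrow> complex \<Rightarrow> nat \<Rightarrow> complex" where
  "tail_coeff c q n = (c * q) ^ n * qpoch_inf (q ^ Suc n) q"

lemma summable_on_tail_coeff_exp:
  fixes c q :: complex and r :: real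
  assumes q: "norm q < 1" and s: "norm (c * q) * exp r < 1"
  shows "(\<lambda>n. norm (tail_coeff c q n) * exp (norm (of_nat n :: complex) * r)) summable_on UNIV"
proof -
  define B where "B = exp (1 / (1 - norm q))"
  define \<rho> where "\<rho> = norm (c * q) * exp r"
  have \<rho>: "0 \<le> \<rho>" "\<rho> < 1"
    using s by (auto simp: \<rho>_def)
  have "summable (\<lambda>n. norm (tail_coeff c q n) * exp (norm (of_nat n :: complex) * r))"
  proof (rule summable_comparison_test')
    show "summable (\<lambda>n. B * \<rho> ^ n)"
      using \<rho> by (intro summable_mult summable_geometric) auto
    fix n :: nat
    have "norm (tail_coeff c q n) * exp (norm (of_nat n :: complex) * r) = norm (qpoch_inf (q ^ Suc n) q) * \<rho> ^ n"
      by (simp add: tail_coeff_def \<rho>_def norm_mult norm_power exp_of_nat_mult[symmetric]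
                    power_mult_distrib mult_ac)
    also have "\<dots> \<le> B * \<rho> ^ n"
      using norm_qpoch_tail_le[OF q, of n] \<rho> unfolding B_def by (intro mult_right_mono) auto
    finally show "norm (norm (tail_coeff c q n) * exp (norm (of_nat n :: complex) * r)) \<le> B * \<rho> ^ n"
      by simp
  qed
  thus ?thesis
    by (subst summable_on_UNIV_nonneg_real_iff) auto
qed

lemma infsum_tail_coeff_exp:
  fixes c q t :: complex and r :: real
  assumes q: "norm q < 1" and s: "norm (c * q) * exp r < 1" and t: "norm t \<le> r"
  shows "(\<Sum>\<^sub>\<infinity>n. tail_coeff c q n * exp (of_nat n * t)) = eval_fps (qpoch_tail_fps q) (c * q * exp t)"
proof -
  have "(\<lambda>n. tail_coeff c q n * exp (of_nat n * t)) summable_on UNIV"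
    by (rule summable_on_mult_exp_if_exp_summable[OF summable_on_tail_coeff_exp[OF q s] t])
  hence "(\<lambda>n. tail_coeff c q n * exp (of_nat n * t)) sums (\<Sum>\<^sub>\<infinity>n. tail_coeff c q n * exp (of_nat n * t))"
    by (intro has_sum_imp_sums has_sum_infsum)
  moreover have "(\<lambda>n. tail_coeff c q n * exp (of_nat n * t)) = (\<lambda>n. qpoch_tail_fps q $ n * (c * q * exp t) ^ n)"
    by (simp add: fun_eq_iff tail_coeff_def qpoch_tail_fps_def exp_of_nat_mult exp_of_nat2_mult power_mult_distrib mult_ac)
  ultimately show ?thesis
    unfolding eval_fps_def by (metis sums_unique)
qed

lemma infsum_tail_coeff_power_eq_Mc:
  fixes c q :: complex and r :: real
  assumes q: "norm q < 1" and s: "norm (c * q) * exp r < 1" and r: "r > 0" and m: "m \<ge> 1"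
  shows "(\<Sum>\<^sub>\<infinity>n. tail_coeff c q n * of_nat n ^ m) = Mc m c q"
proof -
  have "(\<lambda>n. tail_coeff c q n * of_nat n ^ m) summable_on UNIV"
    by (rule summable_on_mult_power_if_exp_summable[OF r summable_on_tail_coeff_exp[OF q s]])
  hence "(\<lambda>n. tail_coeff c q n * of_nat n ^ m) sums (\<Sum>\<^sub>\<infinity>n. tail_coeff c q n * of_nat n ^ m)"
    by (intro has_sum_imp_sums has_sum_infsum)
  hence "(\<lambda>n. tail_coeff c q (Suc n) * of_nat (Suc n) ^ m) sums (\<Sum>\<^sub>\<infinity>n. tail_coeff c q n * of_nat n ^ m)"
    using sums_Suc_iff[of "\<lambda>n. tail_coeff c q n * of_nat n ^ m"] m by (simp add: zero_power)
  moreover have "(\<lambda>n. tail_coeff c q (Suc n) * of_nat (Suc n) ^ m) =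
                  (\<lambda>n. of_nat (Suc n) ^ m * c ^ Suc n * q ^ Suc n * qpoch_inf (q ^ (Suc n + 1)) q)"
    by (simp add: fun_eq_iff tail_coeff_def power_mult_distrib mult_ac del: of_nat_Suc power_Suc)
  ultimately show ?thesis
    unfolding Mc_def by (metis sums_unique)
qed

section \<open>Coefficients of the exponential of a power series\<close>

text \<open>\<open>l \<in> part_multiplicities S n\<close> encodes a partition of \<open>n\<close> into parts from \<open>S\<close>, the part \<open>i\<close>
  occurring \<open>l i\<close> times.\<close>
definition part_multiplicities :: "nat set \<Rightarrow> nat \<Rightarrow> (nat \<Rightarrow> nat) set" where
  "part_multiplicities S n = {l. (\<forall>i. i \<notin> S \<longrightarrow> l i = 0) \<and> (\<Sum>i\<in>S. i * l i) = n}"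

lemma finite_part_multiplicities:
  assumes "finite S" "0 \<notin> S"
  shows "finite (part_multiplicities S n)"
proof (rule finite_subset)
  show "part_multiplicities S n \<subseteq> {l. \<forall>i. (i \<in> S \<longrightarrow> l i \<in> {0..n}) \<and> (i \<notin> S \<longrightarrow> l i = 0)}"
  proof safe
    fix l i
    assume l: "l \<in> part_multiplicities S n" and i: "i \<in> S"
    have "l i \<le> i * l i"
      using i assms(2) by (cases i) auto
    also have "\<dots> \<le> (\<Sum>i\<in>S. i * l i)"
      using i assms(1) by (intro member_le_sum) auto
    finally show "l i \<in> {0..n}"
      using l by (auto simp: part_multiplicities_def)
  qed (auto simp: part_multiplicities_def)
  show "finite {l. \<forall>i. (i \<in> S \<longrightarrow> l i \<in> {0..n}) \<and> (i \<notin> S \<longrightarrow> l i = (0::nat))}"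
    by (rule finite_set_of_finite_funs) (use assms in auto)
qed

lemma bij_betw_part_multiplicities_insert:
  assumes "a \<notin> S" "a > 0" "finite S"
  shows "bij_betw (\<lambda>(p, l). l(a := p)) (SIGMA p:{0..n div a}. part_multiplicities S (n - a * p))
           (part_multiplicities (insert a S) n)"
proof (rule bij_betwI[where g = "\<lambda>L. (L a, L(a := 0))"])
  have sum_upd: "(\<Sum>i\<in>S. i * (l(a := p)) i) = (\<Sum>i\<in>S. i * l i)" for l p
    using assms(1) by (intro sum.cong) auto
  show "(\<lambda>(p, l). l(a := p)) \<in> (SIGMA p:{0..n div a}. part_multiplicities S (n - a * p))
          \<rightarrow> part_multiplicities (insert a S) n"
  proof safe
    fix p l
    assume "p \<in> {0..n div a}" and l: "l \<in> part_multiplicities S (n - a * p)"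
    hence "a * p \<le> n"
      using assms(2) by (auto simp: less_eq_div_iff_mult_less_eq mult.commute)
    thus "l(a := p) \<in> part_multiplicities (insert a S) n"
      using l assms sum_upd by (auto simp: part_multiplicities_def)
  qed
  show "(\<lambda>L. (L a, L(a := 0))) \<in> part_multiplicities (insert a S) n
          \<rightarrow> (SIGMA p:{0..n div a}. part_multiplicities S (n - a * p))"
  proof safe
    fix L
    assume L: "L \<in> part_multiplicities (insert a S) n"
    hence "a * L a + (\<Sum>i\<in>S. i * L i) = n"
      using assms by (simp add: part_multiplicities_def)
    thus "L a \<in> {0..n div a}" "L(a := 0) \<in> part_multiplicities S (n - a * L a)"
      using L assms(2) sum_upd
      by (auto simp: part_multiplicities_def less_eq_div_iff_mult_less_eq mult.commute)
  qed
  show "(\<lambda>L. (L a, L(a := 0))) ((\<lambda>(p, l). l(a := p)) x) = x"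
    if "x \<in> (SIGMA p:{0..n div a}. part_multiplicities S (n - a * p))" for x
    using that assms(1) by (auto simp: part_multiplicities_def)
qed auto

lemma prod_fps_nth_part_multiplicities:
  fixes g :: "nat \<Rightarrow> nat \<Rightarrow> 'a :: comm_ring_1"
  assumes "finite S" "0 \<notin> S"
  shows "(\<Prod>i\<in>S. Abs_fps (\<lambda>k. if i dvd k then g i (k div i) else 0)) $ n
           = (\<Sum>l\<in>part_multiplicities S n. \<Prod>i\<in>S. g i (l i))"
  using assms
proof (induction S arbitrary: n rule: finite_induct)
  case empty
  have "part_multiplicities {} n = (if n = 0 then {\<lambda>_. 0} else {})"
    by (auto simp: part_multiplicities_def)
  thus ?case
    by simp
next
  case (insert a S n)
  define f where "f i = Abs_fps (\<lambda>k. if i dvd k then g i (k div i) else 0)" for i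
  have "a > 0" "0 \<notin> S"
    using insert.prems by auto
  have "(\<Prod>i\<in>insert a S. f i) $ n = (\<Sum>j=0..n. f a $ j * (\<Prod>i\<in>S. f i) $ (n - j))"
    using insert.hyps by (simp add: fps_mult_nth)
  also have "\<dots> = (\<Sum>j\<in>{j\<in>{0..n}. a dvd j}. g a (j div a) * (\<Prod>i\<in>S. f i) $ (n - j))"
    by (subst sum.inter_filter) (auto simp: f_def intro!: sum.cong)
  also have "\<dots> = (\<Sum>p\<in>{0..n div a}. g a p * (\<Prod>i\<in>S. f i) $ (n - a * p))"
    by (rule sum.reindex_bij_witness[where i = "\<lambda>p. a * p" and j = "\<lambda>j. j div a"])
       (use \<open>a > 0\<close> in \<open>auto simp: less_eq_div_iff_mult_less_eq mult.commute intro: div_le_mono\<close>)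
  also have "\<dots> = (\<Sum>p\<in>{0..n div a}. \<Sum>l\<in>part_multiplicities S (n - a * p). g a p * (\<Prod>i\<in>S. g i (l i)))"
    using insert.IH[OF \<open>0 \<notin> S\<close>] by (simp add: f_def sum_distrib_left)
  also have "\<dots> = (\<Sum>(p, l)\<in>(SIGMA p:{0..n div a}. part_multiplicities S (n - a * p)).
                     \<Prod>i\<in>insert a S. g i ((l(a := p)) i))"
  proof (subst sum.Sigma)
    have "(\<Prod>i\<in>S. g i ((l(a := p)) i)) = (\<Prod>i\<in>S. g i (l i))" for l p
      using insert.hyps by (intro prod.cong) auto
    thus "(\<Sum>(p, l)\<in>(SIGMA p:{0..n div a}. part_multiplicities S (n - a * p)). g a p * (\<Prod>i\<in>S. g i (l i))) =
          (\<Sum>(p, l)\<in>(SIGMA p:{0..n div a}. part_multiplicities S (n - a * p)). \<Prod>i\<in>insert a S. g i ((l(a := p)) i))"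
      using insert.hyps by (intro sum.cong) auto
  qed (use finite_part_multiplicities[OF insert.hyps(1) \<open>0 \<notin> S\<close>] in auto)
  also have "\<dots> = (\<Sum>L\<in>part_multiplicities (insert a S) n. \<Prod>i\<in>insert a S. g i (L i))"
    using sum.reindex_bij_betw[OF bij_betw_part_multiplicities_insert[OF insert.hyps(2) \<open>a > 0\<close> insert.hyps(1)],
                               of "\<lambda>L. \<Prod>i\<in>insert a S. g i (L i)"]
    by (simp add: case_prod_unfold)
  finally show ?case
    unfolding f_def .
qed

lemma sum_if_eq_mult:
  fixes X :: "nat \<Rightarrow> 'a :: comm_monoid_add"
  assumes "i > 0"
  shows "(\<Sum>j\<in>{0..k}. if k = i * j then X j else 0) = (if i dvd k then X (k div i) else 0)"
proof (cases "i dvd k")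
  case True
  then obtain p where p: "k = i * p"
    by (auto elim: dvdE)
  have "(\<Sum>j\<in>{0..k}. if k = i * j then X j else 0) = (\<Sum>j\<in>{0..k}. if j = p then X j else 0)"
    using assms by (intro sum.cong) (auto simp: p)
  thus ?thesis
    using True assms p by (simp add: sum.delta)
qed (auto intro!: sum.neutral)

lemma fps_exp_compose_monomial:
  fixes a :: complex
  assumes "i > 0"
  shows "fps_exp 1 oo (fps_const a * fps_X ^ i) =
           Abs_fps (\<lambda>k. if i dvd k then a ^ (k div i) / fact (k div i) else 0)"
proof (rule fps_ext)
  fix k
  have "(fps_exp 1 oo (fps_const a * fps_X ^ i)) $ k = (\<Sum>j\<in>{0..k}. if k = i * j then a ^ j / fact j else 0)"
    unfolding fps_compose_nth
    by (intro sum.cong) (simp_all add: power_mult_distrib power_mult[symmetric])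
  also have "\<dots> = (if i dvd k then a ^ (k div i) / fact (k div i) else 0)"
    by (rule sum_if_eq_mult[OF assms])
  finally show "(fps_exp 1 oo (fps_const a * fps_X ^ i)) $ k =
                  Abs_fps (\<lambda>k. if i dvd k then a ^ (k div i) / fact (k div i) else 0) $ k"
    by simp
qed

lemma fps_exp_compose_sum_monomials:
  fixes a :: "nat \<Rightarrow> complex"
  assumes "finite S" "0 \<notin> S"
  shows "fps_exp 1 oo (\<Sum>i\<in>S. fps_const (a i) * fps_X ^ i) =
           (\<Prod>i\<in>S. fps_exp 1 oo (fps_const (a i) * fps_X ^ i))"
proof (rule fps_expansion_unique_complex)
  have monomial: "(\<lambda>t. a i * t ^ i) has_fps_expansion fps_const (a i) * fps_X ^ i" for i
    by (intro has_fps_expansion_cmult_left has_fps_expansion_fps_X_power)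
  have "(\<Sum>i\<in>S. fps_const (a i) * fps_X ^ i) $ 0 = 0"
    using assms by (auto simp: fps_sum_nth intro!: sum.neutral)
  thus "(\<lambda>t. exp (\<Sum>i\<in>S. a i * t ^ i)) has_fps_expansion (fps_exp 1 oo (\<Sum>i\<in>S. fps_const (a i) * fps_X ^ i))"
    using has_fps_expansion_compose[OF has_fps_expansion_exp1 has_fps_expansion_sum[OF monomial]]
    by (simp add: o_def)
  have "(\<lambda>t. \<Prod>i\<in>S. exp (a i * t ^ i)) has_fps_expansion (\<Prod>i\<in>S. fps_exp 1 oo (fps_const (a i) * fps_X ^ i))"
  proof (rule has_fps_expansion_prod)
    fix i
    assume "i \<in> S"
    hence "(fps_const (a i) * fps_X ^ i) $ 0 = 0"
      using assms by auto
    thus "(\<lambda>t. exp (a i * t ^ i)) has_fps_expansion (fps_exp 1 oo (fps_const (a i) * fps_X ^ i))"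
      using has_fps_expansion_compose[OF has_fps_expansion_exp1 monomial] by (simp add: o_def)
  qed
  thus "(\<lambda>t. exp (\<Sum>i\<in>S. a i * t ^ i)) has_fps_expansion (\<Prod>i\<in>S. fps_exp 1 oo (fps_const (a i) * fps_X ^ i))"
    using assms by (simp add: exp_sum)
qed

lemma fps_power_nth_cong:
  fixes a b :: "'a :: comm_ring_1 fps"
  assumes "\<And>k. k \<le> n \<Longrightarrow> a $ k = b $ k"
  shows "(a ^ i) $ n = (b ^ i) $ n"
  using assms
proof (induction i arbitrary: n)
  case (Suc i n)
  have "(a ^ Suc i) $ n = (\<Sum>j=0..n. a $ j * (a ^ i) $ (n - j))"
    by (simp add: fps_mult_nth)
  also have "\<dots> = (\<Sum>j=0..n. b $ j * (b ^ i) $ (n - j))"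
    using Suc by (intro sum.cong refl arg_cong2[where f = "(*)"] Suc.IH) auto
  also have "\<dots> = (b ^ Suc i) $ n"
    by (simp add: fps_mult_nth)
  finally show ?case .
qed simp

lemma fps_compose_nth_cong:
  fixes a b f :: "'a :: comm_ring_1 fps"
  assumes "\<And>k. k \<le> n \<Longrightarrow> a $ k = b $ k"
  shows "(f oo a) $ n = (f oo b) $ n"
  unfolding fps_compose_nth using fps_power_nth_cong[OF assms] by simp

text \<open>Up to degree \<open>m\<close> the series agrees with the polynomial \<open>\<Sum>i=1..m. u i / i! * t ^ i\<close>, whose
  exponential is a product of exponentials of monomials; the \<open>m\<close>-th coefficient of that product is
  a sum over the part multiplicities of the partitions of \<open>m\<close>.\<close>
lemma fps_exp_compose_nth_eq_bellY:
  fixes u :: "nat \<Rightarrow> complex"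
  shows "(fps_exp 1 oo Abs_fps (\<lambda>i. if i = 0 then 0 else u i / fact i)) $ m = bellY m u / fact m"
proof -
  define P where "P = (\<Sum>i\<in>{1..m}. fps_const (u i / fact i) * fps_X ^ i)"
  have "P $ k = (\<Sum>i\<in>{1..m}. if i = k then u i / fact i else 0)" for k
    unfolding P_def fps_sum_nth by (intro sum.cong) auto
  hence "Abs_fps (\<lambda>i. if i = 0 then 0 else u i / fact i) $ k = P $ k" if "k \<le> m" for k
    using that by (simp add: sum.delta)
  hence "(fps_exp 1 oo Abs_fps (\<lambda>i. if i = 0 then 0 else u i / fact i)) $ m = (fps_exp 1 oo P) $ m"
    by (rule fps_compose_nth_cong)
  also have "fps_exp 1 oo P = (\<Prod>i\<in>{1..m}. Abs_fps (\<lambda>k. if i dvd k then (u i / fact i) ^ (k div i) / fact (k div i) else 0))"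
    unfolding P_def by (simp add: fps_exp_compose_sum_monomials fps_exp_compose_monomial)
  also have "\<dots> $ m = (\<Sum>l\<in>part_multiplicities {1..m} m. \<Prod>i\<in>{1..m}. (u i / fact i) ^ l i / fact (l i))"
    by (subst prod_fps_nth_part_multiplicities[where g = "\<lambda>i p. (u i / fact i) ^ p / fact p"]) auto
  also have "\<dots> = bellY m u / fact m"
    unfolding bellY_def bell_tuples_def part_multiplicities_def sum_divide_distrib
    by (intro sum.cong refl) (simp add: prod_dividef)
  finally show ?thesis .
qed

section \<open>The generating function\<close>

lemma has_fps_expansion_log_qpoch_ratio:
  fixes c q :: complex and r :: real
  assumes q: "norm q < 1" and s: "norm (c * q) * exp r < 1" and r: "r > 0"
  shows "log_qpoch_ratio c q has_fps_expansion Abs_fps (\<lambda>m. if m = 0 then 0 else Kc m c q / fact m)"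
proof -
  have "(\<lambda>t. \<Sum>\<^sub>\<infinity>i. log_coeff c q i * exp (of_nat (Suc (snd i)) * t)) has_fps_expansion
          Abs_fps (\<lambda>m. (\<Sum>\<^sub>\<infinity>i. log_coeff c q i * of_nat (Suc (snd i)) ^ m) / fact m)"
    by (rule has_fps_expansion_infsum_exp[OF r summable_on_log_coeff_exp[OF q s]])
  hence "log_qpoch_ratio c q has_fps_expansion
           Abs_fps (\<lambda>m. (\<Sum>\<^sub>\<infinity>i. log_coeff c q i * of_nat (Suc (snd i)) ^ m) / fact m)
             - fps_const (\<Sum>\<^sub>\<infinity>i. log_coeff c q i)"
    unfolding log_qpoch_ratio_def [abs_def] by (intro has_fps_expansion_diff has_fps_expansion_const)
  also have "Abs_fps (\<lambda>m. (\<Sum>\<^sub>\<infinity>i. log_coeff c q i * of_nat (Suc (snd i)) ^ m) / fact m)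
               - fps_const (\<Sum>\<^sub>\<infinity>i. log_coeff c q i)
             = Abs_fps (\<lambda>m. if m = 0 then 0 else Kc m c q / fact m)"
    using infsum_log_coeff_eq_Kc[OF q s r] by (intro fps_ext) (simp del: of_nat_Suc)
  finally show ?thesis .
qed

lemma has_fps_expansion_tail_series:
  fixes c q :: complex and r :: real
  assumes q: "norm q < 1" and s: "norm (c * q) * exp r < 1" and r: "r > 0"
  shows "(\<lambda>t. \<Sum>\<^sub>\<infinity>n. tail_coeff c q n * exp (of_nat n * t)) has_fps_expansion
           fps_const (eval_fps (qpoch_tail_fps q) (c * q)) + Abs_fps (\<lambda>m. if m = 0 then 0 else Mc m c q / fact m)"
proof -
  have "(\<lambda>t. \<Sum>\<^sub>\<infinity>n. tail_coeff c q n * exp (of_nat n * t)) has_fps_expansion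
          Abs_fps (\<lambda>m. (\<Sum>\<^sub>\<infinity>n. tail_coeff c q n * of_nat n ^ m) / fact m)"
    by (rule has_fps_expansion_infsum_exp[OF r summable_on_tail_coeff_exp[OF q s]])
  also have "Abs_fps (\<lambda>m. (\<Sum>\<^sub>\<infinity>n. tail_coeff c q n * of_nat n ^ m) / fact m)
           = fps_const (eval_fps (qpoch_tail_fps q) (c * q)) + Abs_fps (\<lambda>m. if m = 0 then 0 else Mc m c q / fact m)"
    using infsum_tail_coeff_exp[OF q s, of 0] r
    by (intro fps_ext) (simp add: infsum_tail_coeff_power_eq_Mc[OF q s r])
  finally show ?thesis .
qed

lemma tail_series_eq_qpoch_ratio_exp:
  fixes c q t :: complex and r :: real
  assumes q: "norm q < 1" and s: "norm (c * q) * exp r < 1" and t: "norm t \<le> r"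
  shows "(\<Sum>\<^sub>\<infinity>n. tail_coeff c q n * exp (of_nat n * t)) =
           qpoch_inf q q / qpoch_inf (c * q) q * exp (log_qpoch_ratio c q t)"
proof -
  have "qpoch_inf (c * q) q \<noteq> 0"
    using qpoch_inf_nonzero[OF q] norm_mult_exp_less_one(1)[OF s t] .
  moreover have "qpoch_inf (c * q * exp t) q * eval_fps (qpoch_tail_fps q) (c * q * exp t) = qpoch_inf q q"
    using norm_mult_exp_less_one(2)[OF s t] by (rule qpoch_inf_mult_eval_qpoch_tail_fps[OF q])
  moreover note qpoch_inf_mult_exp_log_qpoch_ratio[OF q s t]
  ultimately show ?thesis
    unfolding infsum_tail_coeff_exp[OF q s t] by (simp add: field_simps) (metis mult.assoc mult.commute)
qed

lemma exists_pos_mult_exp_less_one: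
  fixes x :: real
  assumes "0 \<le> x" "x < 1"
  obtains r where "r > 0" and "x * exp r < 1"
proof
  show "ln (2 / (1 + x)) > 0" and "x * exp (ln (2 / (1 + x))) < 1"
    using assms by (simp_all add: field_simps)
qed

lemma qpoch_ratio_fps_exp_Kc_eq_Mc:
  fixes q c :: complex
  assumes q: "norm q < 1" and cq: "norm (c * q) < 1"
  shows "fps_const (qpoch_inf q q / qpoch_inf (c * q) q)
           * (fps_exp 1 oo Abs_fps (\<lambda>m. if m = 0 then 0 else Kc m c q / fact m))
         = fps_const (qpoch_inf q q / qpoch_inf (c * q) q)
           + Abs_fps (\<lambda>m. if m = 0 then 0 else Mc m c q / fact m)"
proof -
  define C where "C = qpoch_inf q q / qpoch_inf (c * q) q"
  obtain r where r: "r > 0" and s: "norm (c * q) * exp r < 1"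
    using exists_pos_mult_exp_less_one[of "norm (c * q)"] cq by auto
  have "C = eval_fps (qpoch_tail_fps q) (c * q)"
    using qpoch_inf_mult_eval_qpoch_tail_fps[OF q cq] qpoch_inf_nonzero[OF q cq]
    by (auto simp: C_def field_simps)
  hence tail: "(\<lambda>t. \<Sum>\<^sub>\<infinity>n. tail_coeff c q n * exp (of_nat n * t)) has_fps_expansion
           fps_const C + Abs_fps (\<lambda>m. if m = 0 then 0 else Mc m c q / fact m)"
    using has_fps_expansion_tail_series[OF q s r] by simp
  have "eventually (\<lambda>t. C * exp (log_qpoch_ratio c q t) =
                   (\<Sum>\<^sub>\<infinity>n. tail_coeff c q n * exp (of_nat n * t))) (nhds 0)"
    using eventually_nhds_in_open[of "ball 0 r" 0] r
    by (auto elim!: eventually_mono simp: C_def tail_series_eq_qpoch_ratio_exp[OF q s])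
  hence "(\<lambda>t. C * exp (log_qpoch_ratio c q t)) has_fps_expansion
           fps_const C + Abs_fps (\<lambda>m. if m = 0 then 0 else Mc m c q / fact m)"
    using tail by (subst has_fps_expansion_cong) auto
  moreover have "(\<lambda>t. C * exp (log_qpoch_ratio c q t)) has_fps_expansion
                   fps_const C * (fps_exp 1 oo Abs_fps (\<lambda>m. if m = 0 then 0 else Kc m c q / fact m))"
    using has_fps_expansion_compose[OF has_fps_expansion_exp1 has_fps_expansion_log_qpoch_ratio[OF q s r]]
    by (intro has_fps_expansion_cmult_left) (simp add: o_def)
  ultimately show ?thesis
    unfolding C_def[symmetric] by (rule fps_expansion_unique_complex[rotated])
qed

theorem theorem2p2:
  fixes q c :: complex
  assumes "norm q < 1" and "norm (c * q) < 1"
  shows "((fps_const (qpoch_inf q q / qpoch_inf (c * q) q)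
           * (fps_exp 1 oo Abs_fps (\<lambda>m. if m = 0 then 0 else Kc m c q / fact m))
         = fps_const (qpoch_inf q q / qpoch_inf (c * q) q)
           + Abs_fps (\<lambda>m. if m = 0 then 0 else Mc m c q / fact m)))
         \<and> (\<forall>m\<ge>1. Mc m c q = qpoch_inf q q / qpoch_inf (c * q) q * bellY m (\<lambda>i. Kc i c q))"
proof -
  note identity = qpoch_ratio_fps_exp_Kc_eq_Mc[OF assms]
  moreover have "Mc m c q = qpoch_inf q q / qpoch_inf (c * q) q * bellY m (\<lambda>i. Kc i c q)" if "m \<ge> 1" for m
    using arg_cong[OF identity, of "\<lambda>F. F $ m"] that
    by (simp add: fps_exp_compose_nth_eq_bellY field_simps)
  ultimately show ?thesis
    by blast
qed

end
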